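(* Let $\omega\in\Omega$, $x,y\in X$, $z\in\mathbb C\setminus\sigma_\omega$ and $r\ge0$. Then $$G_{\omega,r}(x,y;z)=G_{\omega,0}(x,y;z)-\sum_{s=\max(1,d(x,y))}^{r}p_sN_{s-1}\,g_{\omega,s-1}(x;z)\,g_{\omega,s}(y;z),$$ where an empty sum is zero.
   Context: $(X,\mathbf P,\mathbf n)$ is a hierarchical structure: $X$ infinite countable, $\mathbf n=(n_r)_{r\ge0}$ positive integers, $\mathcal P_r$ partitions of $X$ ("clusters of rank $r$") with $n_0=1$ and rank-0 clusters singletons, every rank-$r$ cluster ($r\ge1$) a disjoint union of exactly $n_r$ rank-$(r-1)$ clusters, and any two points in a common cluster of some rank. $N_r=\prod_{s=0}^rn_s$, $Q_r(x)$ is the rank-$r$ cluster containing $x$, $d(x,y)=\min\{r:y\in Q_r(x)\}$, $(E_r\psi)(x)=\frac1{N_r}\sum_{d(x,y)\le r}\psi(y)$; $(p_r)_{r\ge1}$ positive with $\sum p_r=1$, $p_0=0$. For $\omega\in\mathbb R^X$, $V_\omega$ is multiplication by $\omega(x)$, and $H_{\omega,r}=V_\omega+\sum_{s=0}^rp_sE_s$ (so $H_{\omega,0}=V_\omega$). For each rank-$r$ cluster $Q$, $\ell^2(Q)=\{\psi:\psi=0\text{ off }Q\}$ is invariant under $H_{\omega,r}$; let $\sigma(\omega,Q)$ be the (finite) set of eigenvalues of $H_{\omega,r}$ restricted to $\ell^2(Q)$, and $\sigma_\omega=\bigcup\sigma(\omega,Q)$ over all clusters $Q$ of all ranks $r$.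 For $z\notin\sigma_\omega$, $G_{\omega,r}(x,y;z)=\langle\delta_x,(H_{\omega,r}\!\upharpoonright_{\ell^2(Q_r(x))}-z)^{-1}\delta_y\rangle$ if $d(x,y)\le r$ and $0$ otherwise (this is the matrix element $\langle\delta_x,(H_{\omega,r}-z)^{-1}\delta_y\rangle$), and $g_{\omega,r}(t;z)=\frac1{N_r}\sum_{d(t',t)\le r}G_{\omega,r}(t',t;z)$. *)

theory Defs
  imports Complex_Main "HOL-Library.Countable_Set"
begin

text \<open>Hierarchical structure. Q r x is the rank-r cluster containing x.\<close>
definition hier_struct :: "(nat \<Rightarrow> 'x \<Rightarrow> 'x set) \<Rightarrow> (nat \<Rightarrow> nat) \<Rightarrow> bool" where
  "hier_struct Q n \<longleftrightarrow>
     infinite (UNIV :: 'x set) \<and> countable (UNIV :: 'x set) \<and>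
     n 0 = 1 \<and> (\<forall>r. 0 < n r) \<and>
     (\<forall>x. Q 0 x = {x}) \<and>
     (\<forall>r x. x \<in> Q r x) \<and>
     (\<forall>r x y. y \<in> Q r x \<longrightarrow> Q r y = Q r x) \<and>
     (\<forall>r x. Q r x \<subseteq> Q (Suc r) x) \<and>
     (\<forall>r x. Q (Suc r) x = (\<Union>y\<in>Q (Suc r) x. Q r y)) \<and>
     (\<forall>r x. card (Q r ` Q (Suc r) x) = n (Suc r)) \<and>
     (\<forall>x y. \<exists>r. y \<in> Q r x)"

definition NN :: "(nat \<Rightarrow> nat) \<Rightarrow> nat \<Rightarrow> nat" where
  "NN n r = (\<Prod>s\<le>r. n s)"

definition hdist :: "(nat \<Rightarrow> 'x \<Rightarrow> 'x set) \<Rightarrow> 'x \<Rightarrow> 'x \<Rightarrow> nat" where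
  "hdist Q x y = (LEAST r. y \<in> Q r x)"

definition Eop :: "(nat \<Rightarrow> 'x \<Rightarrow> 'x set) \<Rightarrow> (nat \<Rightarrow> nat) \<Rightarrow> nat \<Rightarrow> ('x \<Rightarrow> complex) \<Rightarrow> 'x \<Rightarrow> complex" where
  "Eop Q n r \<psi> x = (1 / of_nat (NN n r)) * (\<Sum>y\<in>{y. hdist Q x y \<le> r}. \<psi> y)"

definition Hop :: "(nat \<Rightarrow> 'x \<Rightarrow> 'x set) \<Rightarrow> (nat \<Rightarrow> nat) \<Rightarrow> (nat \<Rightarrow> real) \<Rightarrow> ('x \<Rightarrow> real)
      \<Rightarrow> nat \<Rightarrow> ('x \<Rightarrow> complex) \<Rightarrow> 'x \<Rightarrow> complex" where
  "Hop Q n p \<omega> r \<psi> x = of_real (\<omega> x) * \<psi> x + (\<Sum>s\<le>r. of_real (p s) * Eop Q n s \<psi> x)"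

definition is_eig_restr :: "(nat \<Rightarrow> 'x \<Rightarrow> 'x set) \<Rightarrow> (nat \<Rightarrow> nat) \<Rightarrow> (nat \<Rightarrow> real) \<Rightarrow> ('x \<Rightarrow> real)
      \<Rightarrow> nat \<Rightarrow> 'x set \<Rightarrow> complex \<Rightarrow> bool" where
  "is_eig_restr Q n p \<omega> r C z \<longleftrightarrow>
     (\<exists>\<psi>. (\<forall>t. t \<notin> C \<longrightarrow> \<psi> t = 0) \<and> (\<exists>t. \<psi> t \<noteq> 0) \<and>
          (\<forall>t\<in>C. Hop Q n p \<omega> r \<psi> t = z * \<psi> t))"

definition sigma :: "(nat \<Rightarrow> 'x \<Rightarrow> 'x set) \<Rightarrow> (nat \<Rightarrow> nat) \<Rightarrow> (nat \<Rightarrow> real) \<Rightarrow> ('x \<Rightarrow> real) \<Rightarrow> complex set" where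
  "sigma Q n p \<omega> = {z. \<exists>r x. is_eig_restr Q n p \<omega> r (Q r x) z}"

text \<open>Green function: (H_{omega,r} restricted to l^2(Q_r(x)) - z)^{-1} delta_y evaluated at x,
  i.e. the value at x of the unique phi supported on Q_r(x) with (H - z) phi = delta_y on Q_r(x).\<close>
definition Green :: "(nat \<Rightarrow> 'x \<Rightarrow> 'x set) \<Rightarrow> (nat \<Rightarrow> nat) \<Rightarrow> (nat \<Rightarrow> real) \<Rightarrow> ('x \<Rightarrow> real)
      \<Rightarrow> nat \<Rightarrow> 'x \<Rightarrow> 'x \<Rightarrow> complex \<Rightarrow> complex" where
  "Green Q n p \<omega> r x y z =
     (if hdist Q x y \<le> r then
        (THE \<phi>. (\<forall>t. t \<notin> Q r x \<longrightarrow> \<phi> t = 0) \<and>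
               (\<forall>t\<in>Q r x. Hop Q n p \<omega> r \<phi> t - z * \<phi> t = (if t = y then 1 else 0))) x
      else 0)"

definition gfun :: "(nat \<Rightarrow> 'x \<Rightarrow> 'x set) \<Rightarrow> (nat \<Rightarrow> nat) \<Rightarrow> (nat \<Rightarrow> real) \<Rightarrow> ('x \<Rightarrow> real)
      \<Rightarrow> nat \<Rightarrow> 'x \<Rightarrow> complex \<Rightarrow> complex" where
  "gfun Q n p \<omega> r t z = (1 / of_nat (NN n r)) * (\<Sum>t'\<in>{t'. hdist Q t' t \<le> r}. Green Q n p \<omega> r t' t z)"

end

theory Submission
  imports Defs "HOL-Library.Function_Algebras"
begin

(* The hierarchical Hamiltonian satisfies H_r = H_(r-1) + p_r E_r, and E_r is constant on every
   rank-r cluster, so on a rank-r cluster the resolvents of H_r and H_(r-1) differ by a rank-one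
   term. Pairing the equation for psi = (H_r - z)^-1 delta_y against eta = (H_(r-1) - z)^-1 delta_x
   and using the symmetry of H_(r-1) turns this into
     G_r(x,y) = G_(r-1)(x,y) - p_r N_(r-1) g_(r-1)(x) g_r(y),
   and the theorem is the telescoped sum of these steps. Solvability on a cluster needs only that
   z is not an eigenvalue of the finite-dimensional restriction. *)

lemma sum_fun_apply: "(\<Sum>a\<in>A. F a) x = (\<Sum>a\<in>A. F a x)"
  by (induction A rule: infinite_finite_induct) auto

lemma (in vector_space) linear_inj_on_span_imp_surj_on:
  assumes lin: "Vector_Spaces.linear scale scale f" and "finite B"
    and into: "f ` span B \<subseteq> span B" and inj: "inj_on f (span B)"
  shows "f ` span B = span B"
proof -
  interpret f: Vector_Spaces.linear scale scale f by (fact lin)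
  obtain A where A: "A \<subseteq> span B" "independent A" "span B \<subseteq> span A"
    using basis_exists by metis
  have finA: "finite A" using independent_span_bound[OF \<open>finite B\<close> A(2,1)] by simp
  have spanA: "span A = span B" using A span_minimal[OF A(1) subspace_span] by blast
  have indep: "independent (f ` A)" using f.independent_injective_image A(2) inj spanA by simp
  have card: "card (f ` A) = card A"
    using card_image inj_on_subset[OF inj] A(1) by (metis span_superset spanA)
  have "span A \<subseteq> span (f ` A)"
  proof
    fix a assume a: "a \<in> span A"
    show "a \<in> span (f ` A)"
    proof (rule ccontr)
      assume na: "a \<notin> span (f ` A)"
      have "insert a (f ` A) \<subseteq> span A" using a into spanA span_superset by blast
      then have "card (insert a (f ` A)) \<le> card A"
        using independent_span_bound[OF finA independent_insertI[OF na indep]] by simp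
      moreover have "a \<notin> f ` A" using na span_base by blast
      ultimately show False using finA card by simp
    qed
  qed
  then show ?thesis using into spanA f.span_image[of A] by blast
qed

lemma supported_linear_inj_on_imp_surj_on:
  fixes L :: "('x \<Rightarrow> 'a::field) \<Rightarrow> 'x \<Rightarrow> 'a" and C :: "'x set"
  defines "S \<equiv> {f. \<forall>t. t \<notin> C \<longrightarrow> f t = 0}"
  assumes "finite C"
    and add: "\<And>f g. L (f + g) = L f + L g" and scale: "\<And>c f. L (\<lambda>t. c * f t) = (\<lambda>t. c * L f t)"
    and "L ` S \<subseteq> S" and "inj_on L S"
  shows "L ` S = S"
proof -
  define sc :: "'a \<Rightarrow> ('x \<Rightarrow> 'a) \<Rightarrow> 'x \<Rightarrow> 'a" where "sc = (\<lambda>c f t. c * f t)"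
  interpret V: vector_space sc by unfold_locales (auto simp: sc_def fun_eq_iff algebra_simps)
  interpret L: Vector_Spaces.linear sc sc L by unfold_locales (auto simp: sc_def add scale)
  define \<delta> :: "'x \<Rightarrow> 'x \<Rightarrow> 'a" where "\<delta> = (\<lambda>u t. if t = u then 1 else 0)"
  have "V.span (\<delta> ` C) = S"
  proof
    have "V.subspace S" unfolding V.subspace_def by (auto simp: S_def sc_def)
    then show "V.span (\<delta> ` C) \<subseteq> S" by (intro V.span_minimal) (auto simp: S_def \<delta>_def)
    show "S \<subseteq> V.span (\<delta> ` C)"
    proof
      fix f assume "f \<in> S"
      then have "f = (\<Sum>u\<in>C. sc (f u) (\<delta> u))"
        using \<open>finite C\<close> by (auto simp: S_def fun_eq_iff sum_fun_apply sc_def \<delta>_def if_distrib[of "\<lambda>x. _ * x"] cong: if_cong)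
      also have "\<dots> \<in> V.span (\<delta> ` C)" by (intro V.span_sum V.span_scale V.span_base) simp
      finally show "f \<in> V.span (\<delta> ` C)" .
    qed
  qed
  then show ?thesis
    using V.linear_inj_on_span_imp_surj_on[OF L.linear_axioms, of "\<delta> ` C"] assms by simp
qed

lemma Hop_add: "Hop Q n p \<omega> r (\<phi> + \<psi>) t = Hop Q n p \<omega> r \<phi> t + Hop Q n p \<omega> r \<psi> t"
  unfolding Hop_def Eop_def by (simp add: sum.distrib algebra_simps)

lemma Hop_diff: "Hop Q n p \<omega> r (\<phi> - \<psi>) t = Hop Q n p \<omega> r \<phi> t - Hop Q n p \<omega> r \<psi> t"
  unfolding Hop_def Eop_def by (simp add: sum_subtractf algebra_simps)

lemma Hop_scale: "Hop Q n p \<omega> r (\<lambda>t. c * \<phi> t) t = c * Hop Q n p \<omega> r \<phi> t"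
  unfolding Hop_def Eop_def by (simp add: sum_distrib_left algebra_simps)

lemma Hop_Suc: "Hop Q n p \<omega> (Suc k) \<phi> t = Hop Q n p \<omega> k \<phi> t + of_real (p (Suc k)) * Eop Q n (Suc k) \<phi> t"
  unfolding Hop_def by simp

abbreviation delta :: "'x \<Rightarrow> 'x \<Rightarrow> complex" where
  "delta b \<equiv> \<lambda>t. if t = b then 1 else 0"

lemma sum_delta_mult: "finite C \<Longrightarrow> a \<in> C \<Longrightarrow> (\<Sum>t\<in>C. delta a t * f t) = f a"
  by (simp add: if_distrib[of "\<lambda>u. u * _"] cong: if_cong)

locale hierarchy =
  fixes Q :: "nat \<Rightarrow> 'x \<Rightarrow> 'x set" and n :: "nat \<Rightarrow> nat"
  assumes hier_struct: "hier_struct Q n"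
begin

lemma cluster_0: "Q 0 x = {x}"
  and cluster_self: "x \<in> Q r x"
  and cluster_eq: "y \<in> Q r x \<Longrightarrow> Q r y = Q r x"
  and cluster_Suc_mono: "Q r x \<subseteq> Q (Suc r) x"
  and cluster_Suc_Union: "Q (Suc r) x = (\<Union>y\<in>Q (Suc r) x. Q r y)"
  and card_subclusters: "card (Q r ` Q (Suc r) x) = n (Suc r)"
  and cluster_exhaust: "\<exists>r. y \<in> Q r x"
  and branching_pos: "0 < n r"
  using hier_struct unfolding hier_struct_def by simp_all

lemma cluster_sym: "y \<in> Q r x \<longleftrightarrow> x \<in> Q r y"
  using cluster_eq cluster_self by metis

lemma cluster_mono: "r \<le> s \<Longrightarrow> Q r x \<subseteq> Q s x"
proof (induction s rule: dec_induct)
  case (step s)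
  then show ?case using cluster_Suc_mono by blast
qed simp

lemma cluster_subset: "t \<in> Q r x \<Longrightarrow> s \<le> r \<Longrightarrow> Q s t \<subseteq> Q r x"
  using cluster_mono cluster_eq by blast

lemma finite_cluster: "finite (Q r x)"
proof (induction r arbitrary: x)
  case 0
  then show ?case by (simp add: cluster_0)
next
  case (Suc r)
  have "finite (Q r ` Q (Suc r) x)"
    using card_subclusters branching_pos by (metis card_gt_0_iff)
  then have "finite (\<Union>y\<in>Q (Suc r) x. Q r y)" using Suc.IH by (intro finite_Union) auto
  then show ?case by (subst cluster_Suc_Union)
qed

lemma hdist_le_iff: "hdist Q x y \<le> r \<longleftrightarrow> y \<in> Q r x"
proof
  have "y \<in> Q (hdist Q x y) x" using cluster_exhaust unfolding hdist_def by (rule LeastI_ex)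
  then show "hdist Q x y \<le> r \<Longrightarrow> y \<in> Q r x" using cluster_mono by blast
qed (simp add: hdist_def Least_le)

lemma NN_pos: "0 < NN n r"
  using branching_pos unfolding NN_def by (simp add: prod_pos)

lemma Eop_eq: "Eop Q n s \<phi> t = (\<Sum>u\<in>Q s t. \<phi> u) / of_nat (NN n s)"
proof -
  have "{u. hdist Q t u \<le> s} = Q s t" using hdist_le_iff by blast
  then show ?thesis unfolding Eop_def by simp
qed

lemma Eop_symmetric:
  assumes "s \<le> r"
  shows "(\<Sum>t\<in>Q r x. Eop Q n s \<eta> t * \<phi> t) = (\<Sum>t\<in>Q r x. \<eta> t * Eop Q n s \<phi> t)"
proof -
  have sub: "{u \<in> Q r x. u \<in> Q s t} = Q s t" if "t \<in> Q r x" for t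
    using cluster_subset[OF that assms] by blast
  have "(\<Sum>t\<in>Q r x. (\<Sum>u\<in>Q s t. \<eta> u) * \<phi> t) = (\<Sum>t\<in>Q r x. \<Sum>u\<in>{u \<in> Q r x. u \<in> Q s t}. \<eta> u * \<phi> t)"
    using sub by (simp add: sum_distrib_right)
  also have "\<dots> = (\<Sum>u\<in>Q r x. \<Sum>t\<in>{t \<in> Q r x. u \<in> Q s t}. \<eta> u * \<phi> t)"
    by (rule sum.swap_restrict[OF finite_cluster finite_cluster])
  also have "\<dots> = (\<Sum>u\<in>Q r x. \<eta> u * (\<Sum>t\<in>Q s u. \<phi> t))"
    using sub by (simp add: cluster_sym[of _ s] sum_distrib_left)
  finally show ?thesis by (simp add: Eop_eq sum_divide_distrib [symmetric])
qed

lemma Hop_symmetric: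
  assumes "k \<le> r"
  shows "(\<Sum>t\<in>Q r x. Hop Q n p \<omega> k \<eta> t * \<phi> t) = (\<Sum>t\<in>Q r x. \<eta> t * Hop Q n p \<omega> k \<phi> t)"
proof -
  have "(\<Sum>t\<in>Q r x. Hop Q n p \<omega> k \<eta> t * \<phi> t) = (\<Sum>t\<in>Q r x. of_real (\<omega> t) * \<eta> t * \<phi> t)
      + (\<Sum>s\<le>k. of_real (p s) * (\<Sum>t\<in>Q r x. Eop Q n s \<eta> t * \<phi> t))"
    by (simp add: Hop_def algebra_simps sum.distrib sum_distrib_left sum.swap[of _ "Q r x"])
  also have "\<dots> = (\<Sum>t\<in>Q r x. of_real (\<omega> t) * \<eta> t * \<phi> t)
      + (\<Sum>s\<le>k. of_real (p s) * (\<Sum>t\<in>Q r x. \<eta> t * Eop Q n s \<phi> t))"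
    using Eop_symmetric assms by simp
  also have "\<dots> = (\<Sum>t\<in>Q r x. \<eta> t * Hop Q n p \<omega> k \<phi> t)"
    by (simp add: Hop_def algebra_simps sum.distrib sum_distrib_left sum.swap[of _ "Q r x"])
  finally show ?thesis .
qed

lemma Hop_eq_0_off_cluster:
  assumes "\<And>u. u \<notin> Q k x \<Longrightarrow> \<eta> u = 0" and "t \<notin> Q k x"
  shows "Hop Q n p \<omega> k \<eta> t = 0"
proof -
  have "\<eta> u = 0" if "s \<le> k" "u \<in> Q s t" for s u
  proof -
    have "u \<in> Q k t" using cluster_mono that by blast
    then have "u \<notin> Q k x" using assms(2) cluster_eq cluster_self by metis
    then show ?thesis using assms(1) by blast
  qed
  then show ?thesis using assms by (simp add: Hop_def Eop_eq)
qed

lemma Green_eq_0: "y \<notin> Q r x \<Longrightarrow> Green Q n p \<omega> r x y z = 0"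
  by (simp add: Green_def hdist_le_iff)

end

locale hierarchy_resolvent = hierarchy Q n
  for Q :: "nat \<Rightarrow> 'x \<Rightarrow> 'x set" and n :: "nat \<Rightarrow> nat" +
  fixes p :: "nat \<Rightarrow> real" and \<omega> :: "'x \<Rightarrow> real" and z :: complex
  assumes z_not_in_spectrum: "z \<notin> sigma Q n p \<omega>"
begin

definition solves :: "nat \<Rightarrow> 'x set \<Rightarrow> ('x \<Rightarrow> complex) \<Rightarrow> ('x \<Rightarrow> complex) \<Rightarrow> bool" where
  "solves r C f \<phi> \<longleftrightarrow> (\<forall>t. t \<notin> C \<longrightarrow> \<phi> t = 0) \<and> (\<forall>t\<in>C. Hop Q n p \<omega> r \<phi> t - z * \<phi> t = f t)"

lemma solves_homogeneous_imp_0: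
  assumes "solves r (Q r x) (\<lambda>_. 0) \<phi>"
  shows "\<phi> = 0"
proof (rule ccontr)
  assume "\<phi> \<noteq> 0"
  then have "is_eig_restr Q n p \<omega> r (Q r x) z"
    using assms unfolding solves_def is_eig_restr_def by (auto simp: fun_eq_iff)
  then show False using z_not_in_spectrum unfolding sigma_def by blast
qed

lemma solves_unique:
  assumes "solves r (Q r x) f \<phi>" and "solves r (Q r x) f \<psi>"
  shows "\<phi> = \<psi>"
proof -
  have "solves r (Q r x) (\<lambda>_. 0) (\<phi> - \<psi>)"
    using assms by (simp add: solves_def Hop_diff algebra_simps)
  then have "\<phi> - \<psi> = 0" by (rule solves_homogeneous_imp_0)
  then show ?thesis by simp
qed

lemma solves_exists: "\<exists>\<phi>. solves r (Q r x) f \<phi>"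
proof -
  define S :: "('x \<Rightarrow> complex) set" where "S = {\<phi>. \<forall>t. t \<notin> Q r x \<longrightarrow> \<phi> t = 0}"
  define L where "L = (\<lambda>\<phi> t. if t \<in> Q r x then Hop Q n p \<omega> r \<phi> t - z * \<phi> t else 0)"
  have solves_L: "solves r (Q r x) (L \<phi>) \<phi>" if "\<phi> \<in> S" for \<phi>
    using that by (simp add: solves_def S_def L_def)
  have "inj_on L S"
  proof (rule inj_onI)
    fix \<phi> \<psi> assume "\<phi> \<in> S" "\<psi> \<in> S" "L \<phi> = L \<psi>"
    then have "solves r (Q r x) (L \<phi>) \<psi>" using solves_L by simp
    with solves_L[OF \<open>\<phi> \<in> S\<close>] show "\<phi> = \<psi>" by (rule solves_unique)
  qed
  moreover have "L (\<phi> + \<psi>) = L \<phi> + L \<psi>" for \<phi> \<psi>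
    by (simp add: L_def fun_eq_iff Hop_add algebra_simps)
  moreover have "L (\<lambda>t. c * \<phi> t) = (\<lambda>t. c * L \<phi> t)" for c \<phi>
    by (simp add: L_def fun_eq_iff Hop_scale algebra_simps)
  moreover have "L ` S \<subseteq> S" by (auto simp: L_def S_def)
  ultimately have surj: "L ` S = S" unfolding S_def
    by (intro supported_linear_inj_on_imp_surj_on finite_cluster)
  have "(\<lambda>t. if t \<in> Q r x then f t else 0) \<in> L ` S" unfolding surj by (simp add: S_def)
  then obtain \<phi> where "\<phi> \<in> S" and L\<phi>: "(\<lambda>t. if t \<in> Q r x then f t else 0) = L \<phi>" ..
  have "solves r (Q r x) f \<phi>" using solves_L[OF \<open>\<phi> \<in> S\<close>, folded L\<phi>] by (simp add: solves_def)
  then show ?thesis by blast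
qed

lemma Green_eq_solution:
  assumes "y \<in> Q r x" and "solves r (Q r x) (delta y) \<phi>"
  shows "Green Q n p \<omega> r x y z = \<phi> x"
proof -
  have "(THE \<phi>. solves r (Q r x) (delta y) \<phi>) = \<phi>"
  proof (rule the_equality)
    show "solves r (Q r x) (delta y) \<phi>" by (fact assms(2))
  qed (rule solves_unique[OF _ assms(2)])
  then show ?thesis using assms(1) by (simp add: Green_def hdist_le_iff solves_def)
qed

lemma solves_reciprocity:
  assumes "k \<le> r" and "solves k (Q r x) f \<eta>" and "solves k (Q r x) g \<phi>"
  shows "(\<Sum>t\<in>Q r x. f t * \<phi> t) = (\<Sum>t\<in>Q r x. \<eta> t * g t)"
proof -
  have "(\<Sum>t\<in>Q r x. f t * \<phi> t) = (\<Sum>t\<in>Q r x. (Hop Q n p \<omega> k \<eta> t - z * \<eta> t) * \<phi> t)"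
    using assms(2) by (simp add: solves_def)
  also have "\<dots> = (\<Sum>t\<in>Q r x. \<eta> t * (Hop Q n p \<omega> k \<phi> t - z * \<phi> t))"
    using Hop_symmetric[OF assms(1), where \<eta>=\<eta> and \<phi>=\<phi>]
    by (simp add: left_diff_distrib right_diff_distrib sum_subtractf sum_distrib_left ac_simps)
  also have "\<dots> = (\<Sum>t\<in>Q r x. \<eta> t * g t)"
    using assms(3) by (simp add: solves_def)
  finally show ?thesis .
qed

lemma Green_sym: "Green Q n p \<omega> r x y z = Green Q n p \<omega> r y x z"
proof (cases "y \<in> Q r x")
  case True
  then have "x \<in> Q r y" and same: "Q r y = Q r x" using cluster_sym cluster_eq by auto
  obtain \<phi> \<eta> where \<phi>: "solves r (Q r x) (delta y) \<phi>" and \<eta>: "solves r (Q r x) (delta x) \<eta>"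
    using solves_exists by blast
  have "\<phi> x = (\<Sum>t\<in>Q r x. delta x t * \<phi> t)"
    using sum_delta_mult[OF finite_cluster cluster_self] by simp
  also have "\<dots> = (\<Sum>t\<in>Q r x. \<eta> t * delta y t)" using solves_reciprocity[OF order_refl \<eta> \<phi>] .
  also have "\<dots> = \<eta> y"
    using sum_delta_mult[OF finite_cluster True] by (simp add: mult.commute)
  finally show ?thesis
    using Green_eq_solution[OF True \<phi>] Green_eq_solution[OF \<open>x \<in> Q r y\<close> \<eta>[folded same]] by simp
next
  case False
  then have "x \<notin> Q r y" using cluster_sym by blast
  then show ?thesis using Green_eq_0 False by simp
qed

lemma Green_eq_transposed_solution:
  assumes "solves r (Q r x) (delta x) \<eta>"
  shows "Green Q n p \<omega> r x y z = \<eta> y"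
proof (cases "y \<in> Q r x")
  case True
  then have "x \<in> Q r y" and "Q r y = Q r x" using cluster_sym cluster_eq by auto
  then show ?thesis using Green_sym Green_eq_solution assms by metis
next
  case False
  then show ?thesis using Green_eq_0 assms by (simp add: solves_def)
qed

lemma gfun_eq:
  assumes "solves r (Q r y) (delta y) \<psi>"
  shows "gfun Q n p \<omega> r y z = (\<Sum>t\<in>Q r y. \<psi> t) / of_nat (NN n r)"
proof -
  have "Green Q n p \<omega> r t y z = \<psi> t" if "t \<in> Q r y" for t
    using Green_eq_solution assms that cluster_sym cluster_eq by metis
  moreover have "{t. hdist Q t y \<le> r} = Q r y" using hdist_le_iff cluster_sym by blast
  ultimately show ?thesis unfolding gfun_def by simp
qed

lemma solves_extend_by_zero:
  assumes "k \<le> r" and "solves k (Q k x) f \<eta>" and "\<And>t. t \<notin> Q k x \<Longrightarrow> f t = 0"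
  shows "solves k (Q r x) f \<eta>"
proof -
  have \<eta>_0: "\<eta> t = 0" if "t \<notin> Q k x" for t using assms(2) that by (simp add: solves_def)
  then have "Hop Q n p \<omega> k \<eta> t = 0" if "t \<notin> Q k x" for t
    using Hop_eq_0_off_cluster that by blast
  moreover have "Q k x \<subseteq> Q r x" using cluster_mono assms(1) by blast
  ultimately show ?thesis
    using assms(2,3) \<eta>_0 unfolding solves_def by (metis subsetD diff_0_right mult_zero_right)
qed

lemma Green_Suc:
  assumes "y \<in> Q (Suc k) x"
  shows "Green Q n p \<omega> (Suc k) x y z = Green Q n p \<omega> k x y z
           - of_real (p (Suc k)) * of_nat (NN n k) * gfun Q n p \<omega> k x z * gfun Q n p \<omega> (Suc k) y z"
proof -
  let ?C = "Q (Suc k) x"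
  have k_le: "k \<le> Suc k" by simp
  obtain \<psi> where \<psi>: "solves (Suc k) ?C (delta y) \<psi>" using solves_exists by blast
  obtain \<eta> where \<eta>: "solves k (Q k x) (delta x) \<eta>" using solves_exists by blast
  define c where "c = of_real (p (Suc k)) * gfun Q n p \<omega> (Suc k) y z"
  have "Q (Suc k) y = ?C" using cluster_eq assms by blast
  then have "Eop Q n (Suc k) \<psi> t = gfun Q n p \<omega> (Suc k) y z" if "t \<in> ?C" for t
    using gfun_eq \<psi> cluster_eq[OF that] by (simp add: Eop_eq)
  then have \<psi>_lower: "solves k ?C (\<lambda>t. delta y t - c) \<psi>"
    using \<psi> by (auto simp: solves_def Hop_Suc c_def algebra_simps)
  have \<eta>_extended: "solves k ?C (delta x) \<eta>"
    by (rule solves_extend_by_zero[OF k_le \<eta>]) (use cluster_self in fastforce)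
  have "Green Q n p \<omega> (Suc k) x y z = (\<Sum>t\<in>?C. delta x t * \<psi> t)"
    using Green_eq_solution[OF assms \<psi>] sum_delta_mult[OF finite_cluster cluster_self] by simp
  also have "\<dots> = (\<Sum>t\<in>?C. \<eta> t * (delta y t - c))"
    using solves_reciprocity[OF k_le \<eta>_extended \<psi>_lower] .
  also have "\<dots> = \<eta> y - c * (\<Sum>t\<in>?C. \<eta> t)"
    using sum_delta_mult[OF finite_cluster assms, of \<eta>]
    by (simp add: right_diff_distrib sum_subtractf sum_distrib_left mult.commute)
  also have "(\<Sum>t\<in>?C. \<eta> t) = (\<Sum>t\<in>Q k x. \<eta> t)"
    using \<eta> cluster_mono[of k "Suc k"] by (intro sum.mono_neutral_right finite_cluster) (auto simp: solves_def)
  also have "\<dots> = of_nat (NN n k) * gfun Q n p \<omega> k x z"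
    using gfun_eq[OF \<eta>] NN_pos[of k] by simp
  finally show ?thesis using Green_eq_transposed_solution[OF \<eta>] by (simp add: c_def ac_simps)
qed

end

theorem proposition5:
  fixes Q :: "nat \<Rightarrow> 'x \<Rightarrow> 'x set" and n :: "nat \<Rightarrow> nat" and p :: "nat \<Rightarrow> real"
    and \<omega> :: "'x \<Rightarrow> real" and x y :: 'x and z :: complex and r :: nat
  assumes "hier_struct Q n"
    and "p 0 = 0" and "\<And>s. s \<ge> 1 \<Longrightarrow> p s > 0" and "p sums 1"
    and "z \<notin> sigma Q n p \<omega>"
  shows "Green Q n p \<omega> r x y z =
           Green Q n p \<omega> 0 x y z
           - (\<Sum>s\<in>{max 1 (hdist Q x y)..r}.
                of_real (p s) * of_nat (NN n (s - 1)) * gfun Q n p \<omega> (s - 1) x z * gfun Q n p \<omega> s y z)"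
proof -
  interpret hierarchy_resolvent Q n p \<omega> z
    using assms(1,5) by unfold_locales
  show ?thesis
  proof (induction r)
    case (Suc k)
    show ?case
    proof (cases "y \<in> Q (Suc k) x")
      case True
      then have "{max 1 (hdist Q x y)..Suc k} = insert (Suc k) {max 1 (hdist Q x y)..k}"
        using hdist_le_iff by (intro atLeastAtMostSuc_conv) simp
      then show ?thesis using Green_Suc[OF True] Suc.IH by simp
    next
      case False
      then have "y \<notin> Q k x" and "\<not> hdist Q x y \<le> Suc k"
        using cluster_mono[of k "Suc k" x] hdist_le_iff by auto
      then show ?thesis using False Suc.IH Green_eq_0 by simp
    qed
  qed simp
qed

end
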